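(* Let $\alpha(k,b)=b/(k\ln b)\ge2$ and $b$ sufficiently large. In a uniformly random proper $k$-coloring of the complete tree $T$ with branching factor $b$, the probability that any given vertex of $T$ is not frozen is at most $b^{-1}$.
   Context: A vertex $v$ is frozen in coloring $\sigma$ if every proper coloring agreeing with $\sigma$ on the leaves of the subtree rooted at $v$ gives $v$ the color $\sigma(v)$; leaves are always frozen. *)

theory Defs
  imports Complex_Main "HOL-Library.FuncSet"
begin

text \<open>The complete tree with branching factor b and depth h: vertices are words over
  {0..<b} of length at most h; the root is [], the children of v are v @ [i] (i < b);
  the leaves are the words of length exactly h.\<close>

definition tree_vertices :: "nat \<Rightarrow> nat \<Rightarrow> nat list set" where
  "tree_vertices b h = {v. length v \<le> h \<and> (\<forall>x\<in>set v. x < b)}"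

definition tree_leaves :: "nat \<Rightarrow> nat \<Rightarrow> nat list set" where
  "tree_leaves b h = {v \<in> tree_vertices b h. length v = h}"

definition subtree :: "nat \<Rightarrow> nat \<Rightarrow> nat list \<Rightarrow> nat list set" where
  "subtree b h v = {w \<in> tree_vertices b h. \<exists>u. w = v @ u}"

definition proper_on :: "nat \<Rightarrow> nat list set \<Rightarrow> (nat list \<Rightarrow> nat) \<Rightarrow> bool" where
  "proper_on k S tau \<longleftrightarrow> (\<forall>w\<in>S. tau w < k) \<and>
     (\<forall>w i. w \<in> S \<longrightarrow> w @ [i] \<in> S \<longrightarrow> tau w \<noteq> tau (w @ [i]))"

text \<open>All proper k-colourings of the tree (as extensional functions, so the set is finite).\<close>
definition colorings :: "nat \<Rightarrow> nat \<Rightarrow> nat \<Rightarrow> (nat list \<Rightarrow> nat) set" where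
  "colorings b h k = {sigma \<in> tree_vertices b h \<rightarrow>\<^sub>E {..<k}. proper_on k (tree_vertices b h) sigma}"

definition frozen :: "nat \<Rightarrow> nat \<Rightarrow> nat \<Rightarrow> (nat list \<Rightarrow> nat) \<Rightarrow> nat list \<Rightarrow> bool" where
  "frozen b h k sigma v \<longleftrightarrow>
     (\<forall>tau. proper_on k (subtree b h v) tau \<longrightarrow>
        (\<forall>w \<in> subtree b h v \<inter> tree_leaves b h. tau w = sigma w) \<longrightarrow> tau v = sigma v)"

end

theory Submission
  imports Defs
begin

text \<open>Count colourings with a prescribed root colour: removing the root of the depth-(h+1)
  tree leaves b independent depth-h trees whose roots avoid the root colour, so there are
  a(h+1) = ((k-1) a(h))^b colourings per root colour. We show by induction on h that, for every
  vertex v and root colour c, at most a(h)/b of them leave v unfrozen.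
  For a vertex below the root this follows from the bound in the subtree containing v, since v
  stays frozen when its subtree's colouring keeps it frozen. For the root itself, an unfrozen
  root can be recoloured to some c' which no child is frozen to; for fixed c' each child then
  ranges over a set of size at most (k-1) a(h) - (1 - 1/b) a(h), and the bound reduces to
  b (k-1) (1 - (b-1)/(b(k-1)))^b \<le> 1, which holds once b \<ge> 2 k ln b.\<close>

lemma tree_vertices_Nil [simp]: "[] \<in> tree_vertices b h"
  by (simp add: tree_vertices_def)

lemma Cons_in_tree_vertices_Suc [simp]:
  "j # w \<in> tree_vertices b (Suc h) \<longleftrightarrow> j < b \<and> w \<in> tree_vertices b h"
  by (auto simp: tree_vertices_def)

lemma tree_vertices_0: "tree_vertices b 0 = {[]}"
  by (auto simp: tree_vertices_def)

lemma subtree_Nil [simp]: "subtree b h [] = tree_vertices b h"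
  by (auto simp: subtree_def)

lemma Cons_in_subtree_Suc [simp]:
  "j # w \<in> subtree b (Suc h) (j # v) \<longleftrightarrow> j < b \<and> w \<in> subtree b h v"
  by (auto simp: subtree_def)

lemma finite_tree_vertices: "finite (tree_vertices b h)"
proof -
  have "tree_vertices b h \<subseteq> {xs. set xs \<subseteq> {..<b} \<and> length xs \<le> h}"
    by (auto simp: tree_vertices_def)
  thus ?thesis
    using finite_lists_length_le[of "{..<b}" h] finite_subset by blast
qed

lemma finite_colorings: "finite (colorings b h k)"
proof (rule finite_subset)
  show "colorings b h k \<subseteq> tree_vertices b h \<rightarrow>\<^sub>E {..<k}"
    by (auto simp: colorings_def)
  show "finite (tree_vertices b h \<rightarrow>\<^sub>E {..<k})"
    by (intro finite_PiE finite_tree_vertices) auto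
qed

lemma colorings_Nil_less: "\<sigma> \<in> colorings b h k \<Longrightarrow> \<sigma> [] < k"
  by (auto simp: colorings_def proper_on_def)

lemma proper_on_child_neq:
  "proper_on k S \<tau> \<Longrightarrow> w \<in> S \<Longrightarrow> w @ [i] \<in> S \<Longrightarrow> \<tau> w \<noteq> \<tau> (w @ [i])"
  unfolding proper_on_def by blast

lemma proper_on_subset: "proper_on k S \<tau> \<Longrightarrow> T \<subseteq> S \<Longrightarrow> proper_on k T \<tau>"
  by (auto simp: proper_on_def)

lemma proper_on_cong: "(\<And>w. w \<in> S \<Longrightarrow> \<tau> w = \<tau>' w) \<Longrightarrow> proper_on k S \<tau> \<longleftrightarrow> proper_on k S \<tau>'"
  by (auto simp: proper_on_def)

lemma proper_on_Cons: "proper_on k S \<tau> \<Longrightarrow> proper_on k {w. j # w \<in> S} (\<lambda>w. \<tau> (j # w))"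
  unfolding proper_on_def by (metis append_Cons mem_Collect_eq)

lemma proper_on_tree_vertices_Cons:
  assumes "proper_on k (tree_vertices b (Suc h)) \<tau>" "j < b"
  shows "proper_on k (tree_vertices b h) (\<lambda>w. \<tau> (j # w))"
  using proper_on_Cons[OF assms(1), of j] assms(2) by (simp add: Collect_mem_eq)

definition child_coloring :: "nat \<Rightarrow> nat \<Rightarrow> (nat list \<Rightarrow> nat) \<Rightarrow> nat \<Rightarrow> nat list \<Rightarrow> nat" where
  "child_coloring b h \<sigma> j = restrict (\<lambda>w. \<sigma> (j # w)) (tree_vertices b h)"

definition root_join :: "nat \<Rightarrow> nat \<Rightarrow> nat \<Rightarrow> (nat \<Rightarrow> nat list \<Rightarrow> nat) \<Rightarrow> nat list \<Rightarrow> nat" where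
  "root_join b h c F =
     restrict (\<lambda>w. case w of [] \<Rightarrow> c | j # w' \<Rightarrow> F j w') (tree_vertices b (Suc h))"

lemma child_coloring_in_colorings:
  assumes "\<sigma> \<in> colorings b (Suc h) k" "j < b"
  shows "child_coloring b h \<sigma> j \<in> colorings b h k"
proof -
  have "proper_on k (tree_vertices b h) (\<lambda>w. \<sigma> (j # w))"
    using assms by (intro proper_on_tree_vertices_Cons) (auto simp: colorings_def)
  moreover have "proper_on k (tree_vertices b h) (child_coloring b h \<sigma> j)
      \<longleftrightarrow> proper_on k (tree_vertices b h) (\<lambda>w. \<sigma> (j # w))"
    by (rule proper_on_cong) (simp add: child_coloring_def)
  moreover have "child_coloring b h \<sigma> j \<in> tree_vertices b h \<rightarrow>\<^sub>E {..<k}"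
    using assms by (auto simp: colorings_def child_coloring_def)
  ultimately show ?thesis
    by (simp add: colorings_def)
qed

lemma child_coloring_Nil_neq:
  assumes "\<sigma> \<in> colorings b (Suc h) k" "j < b"
  shows "child_coloring b h \<sigma> j [] \<noteq> \<sigma> []"
proof -
  have "proper_on k (tree_vertices b (Suc h)) \<sigma>"
    using assms(1) by (simp add: colorings_def)
  from proper_on_child_neq[OF this tree_vertices_Nil, of j] assms(2)
  show ?thesis
    by (auto simp: child_coloring_def)
qed

lemma colorings_eqI:
  assumes "\<sigma> \<in> colorings b (Suc h) k" "\<sigma>' \<in> colorings b (Suc h) k" "\<sigma> [] = \<sigma>' []"
    and "\<And>j. j < b \<Longrightarrow> child_coloring b h \<sigma> j = child_coloring b h \<sigma>' j"
  shows "\<sigma> = \<sigma>'"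
proof
  fix w
  show "\<sigma> w = \<sigma>' w"
  proof (cases "w \<in> tree_vertices b (Suc h)")
    case False
    with assms(1,2) show ?thesis
      by (auto simp: colorings_def PiE_def extensional_def)
  next
    case True
    show ?thesis
    proof (cases w)
      case Nil
      with assms(3) show ?thesis by simp
    next
      case (Cons j w')
      with True have "j < b" "w' \<in> tree_vertices b h" by auto
      with assms(4)[of j] show ?thesis
        unfolding Cons child_coloring_def by (metis restrict_apply')
    qed
  qed
qed

lemma root_join_Nil: "root_join b h c F [] = c"
  by (simp add: root_join_def)

lemma child_coloring_root_join:
  assumes "j < b" "F j \<in> colorings b h k"
  shows "child_coloring b h (root_join b h c F) j = F j"
proof
  fix w
  show "child_coloring b h (root_join b h c F) j w = F j w"
    using assms by (cases "w \<in> tree_vertices b h")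
      (auto simp: child_coloring_def root_join_def colorings_def PiE_def extensional_def)
qed

lemma root_join_in_colorings:
  assumes "c < k" and F: "\<And>j. j < b \<Longrightarrow> F j \<in> colorings b h k \<and> F j [] \<noteq> c"
  shows "root_join b h c F \<in> colorings b (Suc h) k"
  unfolding colorings_def
proof (intro CollectI conjI)
  have "root_join b h c F w < k" if "w \<in> tree_vertices b (Suc h)" for w
  proof (cases w)
    case Nil
    with assms(1) show ?thesis by (simp add: root_join_def)
  next
    case (Cons j w')
    with that F[of j] show ?thesis
      by (auto simp: root_join_def colorings_def proper_on_def)
  qed
  moreover have "root_join b h c F w \<noteq> root_join b h c F (w @ [i])"
    if "w \<in> tree_vertices b (Suc h)" "w @ [i] \<in> tree_vertices b (Suc h)" for w i
  proof (cases w)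
    case Nil
    with that F[of i] show ?thesis by (simp add: root_join_def)
  next
    case (Cons j w')
    with that F[of j] show ?thesis
      by (auto simp: root_join_def colorings_def proper_on_def)
  qed
  ultimately show "proper_on k (tree_vertices b (Suc h)) (root_join b h c F)"
    by (simp add: proper_on_def)
  show "root_join b h c F \<in> tree_vertices b (Suc h) \<rightarrow>\<^sub>E {..<k}"
    using \<open>\<And>w. w \<in> tree_vertices b (Suc h) \<Longrightarrow> root_join b h c F w < k\<close>
    by (auto simp: root_join_def)
qed

text \<open>Removing the root identifies the colourings with root colour c with the b-tuples of
  colourings of the child subtrees whose roots avoid c.\<close>

lemma card_colorings_root_children:
  assumes "c < k"
  shows "card {\<sigma> \<in> colorings b (Suc h) k. \<sigma> [] = c \<and> (\<forall>j<b. R j (child_coloring b h \<sigma> j))}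
    = (\<Prod>j<b. card {\<tau> \<in> colorings b h k. \<tau> [] \<noteq> c \<and> R j \<tau>})"
proof -
  let ?S = "{\<sigma> \<in> colorings b (Suc h) k. \<sigma> [] = c \<and> (\<forall>j<b. R j (child_coloring b h \<sigma> j))}"
  let ?T = "\<Pi>\<^sub>E j\<in>{..<b}. {\<tau> \<in> colorings b h k. \<tau> [] \<noteq> c \<and> R j \<tau>}"
  let ?f = "\<lambda>\<sigma>. \<lambda>j\<in>{..<b}. child_coloring b h \<sigma> j"
  have "inj_on ?f ?S"
  proof
    fix \<sigma> \<sigma>' assume "\<sigma> \<in> ?S" "\<sigma>' \<in> ?S" and eq: "?f \<sigma> = ?f \<sigma>'"
    moreover have "child_coloring b h \<sigma> j = child_coloring b h \<sigma>' j" if "j < b" for j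
      using fun_cong[OF eq, of j] that by simp
    ultimately show "\<sigma> = \<sigma>'"
      by (intro colorings_eqI[of \<sigma> b h k \<sigma>']) auto
  qed
  moreover have "?f ` ?S = ?T"
  proof
    show "?f ` ?S \<subseteq> ?T"
    proof (rule image_subsetI, rule PiE_I)
      fix \<sigma> j assume "\<sigma> \<in> ?S" "j \<in> {..<b}"
      then show "?f \<sigma> j \<in> {\<tau> \<in> colorings b h k. \<tau> [] \<noteq> c \<and> R j \<tau>}"
        using child_coloring_in_colorings child_coloring_Nil_neq by auto
    qed simp
    show "?T \<subseteq> ?f ` ?S"
    proof
      fix F assume F: "F \<in> ?T"
      hence Fj: "F j \<in> colorings b h k \<and> F j [] \<noteq> c \<and> R j (F j)" if "j < b" for j
        using that by auto
      have "?f (root_join b h c F) j = F j" for j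
      proof (cases "j < b")
        case True
        then show ?thesis
          using Fj[of j] child_coloring_root_join[of j b F h k c] by simp
      next
        case False
        then show ?thesis
          using F by (simp add: PiE_def extensional_def)
      qed
      moreover have "root_join b h c F \<in> ?S"
        using Fj root_join_in_colorings[OF assms, of b F h] child_coloring_root_join[of _ b F h k c]
        by (simp add: root_join_Nil)
      ultimately show "F \<in> ?f ` ?S"
        by (intro image_eqI[of F ?f "root_join b h c F"]) auto
    qed
  qed
  ultimately have "card ?S = card ?T"
    using card_image[of ?f ?S] by simp
  also have "\<dots> = (\<Prod>j<b. card {\<tau> \<in> colorings b h k. \<tau> [] \<noteq> c \<and> R j \<tau>})"
    by (rule card_PiE) simp
  finally show ?thesis .
qed

lemma card_colorings_root_in:
  assumes "finite C"
  shows "card {\<tau> \<in> colorings b h k. \<tau> [] \<in> C \<and> P \<tau>}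
    = (\<Sum>c\<in>C. card {\<tau> \<in> colorings b h k. \<tau> [] = c \<and> P \<tau>})"
proof -
  have "card {\<tau> \<in> colorings b h k. \<tau> [] \<in> C \<and> P \<tau>}
      = card (\<Union>c\<in>C. {\<tau> \<in> colorings b h k. \<tau> [] = c \<and> P \<tau>})"
    by (rule arg_cong[where f = card]) auto
  also have "\<dots> = (\<Sum>c\<in>C. card {\<tau> \<in> colorings b h k. \<tau> [] = c \<and> P \<tau>})"
    by (rule card_UN_disjoint) (use assms finite_colorings in auto)
  finally show ?thesis .
qed

lemma card_colorings_sum_roots:
  "card {\<tau> \<in> colorings b h k. P \<tau>} = (\<Sum>c<k. card {\<tau> \<in> colorings b h k. \<tau> [] = c \<and> P \<tau>})"
proof -
  have "{\<tau> \<in> colorings b h k. P \<tau>} = {\<tau> \<in> colorings b h k. \<tau> [] \<in> {..<k} \<and> P \<tau>}"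
    using colorings_Nil_less by auto
  then show ?thesis
    using card_colorings_root_in[of "{..<k}" b h k P] by simp
qed

lemma card_colorings_root_neq:
  "card {\<tau> \<in> colorings b h k. \<tau> [] \<noteq> c \<and> P \<tau>}
    = (\<Sum>c'\<in>{..<k} - {c}. card {\<tau> \<in> colorings b h k. \<tau> [] = c' \<and> P \<tau>})"
proof -
  have "{\<tau> \<in> colorings b h k. \<tau> [] \<noteq> c \<and> P \<tau>}
      = {\<tau> \<in> colorings b h k. \<tau> [] \<in> {..<k} - {c} \<and> P \<tau>}"
    using colorings_Nil_less by auto
  then show ?thesis
    using card_colorings_root_in[of "{..<k} - {c}" b h k P] by simp
qed

fun rooted_count :: "nat \<Rightarrow> nat \<Rightarrow> nat \<Rightarrow> nat" where
  "rooted_count b k 0 = 1"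
| "rooted_count b k (Suc h) = ((k - 1) * rooted_count b k h) ^ b"

lemma colorings_0_root_eq:
  assumes "c < k"
  shows "{\<sigma> \<in> colorings b 0 k. \<sigma> [] = c} = {restrict (\<lambda>_. c) {[] :: nat list}}"
proof (intro equalityI subsetI)
  fix \<sigma> :: "nat list \<Rightarrow> nat" assume "\<sigma> \<in> {\<sigma> \<in> colorings b 0 k. \<sigma> [] = c}"
  then have "\<sigma> \<in> extensional {[]}" "\<sigma> [] = c"
    by (auto simp: colorings_def tree_vertices_0 PiE_def)
  then show "\<sigma> \<in> {restrict (\<lambda>_. c) {[] :: nat list}}"
    by (force simp: extensional_def)
next
  fix \<sigma> :: "nat list \<Rightarrow> nat" assume "\<sigma> \<in> {restrict (\<lambda>_. c) {[] :: nat list}}"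
  with assms show "\<sigma> \<in> {\<sigma> \<in> colorings b 0 k. \<sigma> [] = c}"
    by (simp add: colorings_def proper_on_def tree_vertices_0)
qed

lemma card_colorings_root_neq_eq_sum:
  "card {\<tau> \<in> colorings b h k. \<tau> [] \<noteq> c}
    = (\<Sum>c'\<in>{..<k} - {c}. card {\<tau> \<in> colorings b h k. \<tau> [] = c'})"
  using card_colorings_root_neq[of b h k c "\<lambda>_. True"] by simp

lemma card_colorings_root_eq:
  "c < k \<Longrightarrow> card {\<sigma> \<in> colorings b h k. \<sigma> [] = c} = rooted_count b k h"
proof (induction h arbitrary: c)
  case 0
  then show ?case by (simp add: colorings_0_root_eq)
next
  case (Suc h)
  have "card {\<tau> \<in> colorings b h k. \<tau> [] \<noteq> c} = (k - 1) * rooted_count b k h"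
    using Suc by (simp add: card_colorings_root_neq_eq_sum)
  then show ?case
    using card_colorings_root_children[OF Suc.prems, of b h "\<lambda>_ _. True"] by simp
qed

lemma card_colorings_root_neq_eq:
  "c < k \<Longrightarrow> card {\<tau> \<in> colorings b h k. \<tau> [] \<noteq> c} = (k - 1) * rooted_count b k h"
  by (simp add: card_colorings_root_neq_eq_sum card_colorings_root_eq)

lemma frozen_leaf: "v \<in> tree_leaves b h \<Longrightarrow> frozen b h k \<sigma> v"
  by (auto simp: frozen_def subtree_def tree_leaves_def)

lemma frozen_Cons:
  assumes "j < b" "v \<in> tree_vertices b h" "frozen b h k (child_coloring b h \<sigma> j) v"
  shows "frozen b (Suc h) k \<sigma> (j # v)"
  unfolding frozen_def
proof (intro allI impI)
  fix \<tau>
  assume \<tau>: "proper_on k (subtree b (Suc h) (j # v)) \<tau>"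
    and leaves: "\<forall>w\<in>subtree b (Suc h) (j # v) \<inter> tree_leaves b (Suc h). \<tau> w = \<sigma> w"
  have "{w. j # w \<in> subtree b (Suc h) (j # v)} = subtree b h v"
    using assms(1) by auto
  with proper_on_Cons[OF \<tau>, of j]
  have "proper_on k (subtree b h v) (\<lambda>w. \<tau> (j # w))"
    by simp
  moreover have "\<forall>w\<in>subtree b h v \<inter> tree_leaves b h. \<tau> (j # w) = child_coloring b h \<sigma> j w"
    using leaves assms(1) by (auto simp: child_coloring_def tree_leaves_def)
  ultimately have "\<tau> (j # v) = child_coloring b h \<sigma> j v"
    using assms(3) unfolding frozen_def by blast
  with assms(2) show "\<tau> (j # v) = \<sigma> (j # v)"
    by (simp add: child_coloring_def)
qed

lemma unfrozen_root_free_color: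
  assumes "\<sigma> \<in> colorings b (Suc h) k" "\<not> frozen b (Suc h) k \<sigma> []"
  obtains c' where "c' < k" "c' \<noteq> \<sigma> []"
    "\<And>j. j < b \<Longrightarrow> \<not> (frozen b h k (child_coloring b h \<sigma> j) [] \<and> child_coloring b h \<sigma> j [] = c')"
proof -
  obtain \<tau> where \<tau>: "proper_on k (tree_vertices b (Suc h)) \<tau>"
    and leaves: "\<forall>w\<in>tree_vertices b (Suc h) \<inter> tree_leaves b (Suc h). \<tau> w = \<sigma> w"
    and recolored: "\<tau> [] \<noteq> \<sigma> []"
    using assms(2) unfolding frozen_def subtree_Nil by blast
  have "\<not> (frozen b h k (child_coloring b h \<sigma> j) [] \<and> child_coloring b h \<sigma> j [] = \<tau> [])"
    if j: "j < b" for j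
  proof
    assume child: "frozen b h k (child_coloring b h \<sigma> j) [] \<and> child_coloring b h \<sigma> j [] = \<tau> []"
    have "subtree b (Suc h) [j] \<subseteq> tree_vertices b (Suc h)"
      by (auto simp: subtree_def)
    then have "proper_on k (subtree b (Suc h) [j]) \<tau>"
      using \<tau> by (rule proper_on_subset[rotated])
    moreover have "\<forall>w\<in>subtree b (Suc h) [j] \<inter> tree_leaves b (Suc h). \<tau> w = \<sigma> w"
      using leaves \<open>subtree b (Suc h) [j] \<subseteq> tree_vertices b (Suc h)\<close> by blast
    moreover have "frozen b (Suc h) k \<sigma> [j]"
      using frozen_Cons[OF j tree_vertices_Nil] child by simp
    ultimately have "\<tau> [j] = \<sigma> [j]"
      unfolding frozen_def by blast
    also have "\<sigma> [j] = \<tau> []"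
      using child j by (simp add: child_coloring_def)
    finally show False
      using proper_on_child_neq[OF \<tau> tree_vertices_Nil, of j] j by simp
  qed
  moreover have "\<tau> [] < k"
    using \<tau> by (simp add: proper_on_def)
  ultimately show thesis
    using that recolored by blast
qed

lemma exp_deficit_le:
  fixes b m :: nat
  assumes m: "m \<ge> 1" and b: "b \<ge> 3" and hb: "real b \<ge> 2 * (real m + 1) * ln (real b)"
  shows "real b * real m * exp (- ((real b - 1) / real m)) \<le> 1"
proof -
  have bpos: "real b > 0" using b by simp
  have lnb: "ln (real b) \<ge> 1"
    using exp_le b bpos by (subst ln_ge_iff) auto
  have "(real b - 1) / (real m + 1) \<le> (real b - 1) / real m"
    using b m by (intro divide_left_mono) auto
  moreover have "real b / (real m + 1) \<ge> 2 * ln (real b)"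
    using hb m by (simp add: field_simps)
  moreover have "1 / (real m + 1) \<le> 1 / 2"
    using m by (simp add: field_simps)
  ultimately have "(real b - 1) / real m \<ge> 2 * ln (real b) - 1 / 2"
    by (simp only: diff_divide_distrib)
  hence "- ((real b - 1) / real m) \<le> 1 / 2 - 2 * ln (real b)"
    by linarith
  hence "exp (- ((real b - 1) / real m)) \<le> exp (1 / 2 - 2 * ln (real b))"
    by simp
  also have "\<dots> = exp (1 / 2) / exp (ln (real b)) ^ 2"
    by (simp add: exp_diff exp_of_nat_mult[symmetric])
  also have "\<dots> = exp (1 / 2) / real b ^ 2"
    using bpos by simp
  finally have "real b * real m * exp (- ((real b - 1) / real m)) \<le> real m * exp (1 / 2) / real b"
    using bpos m by (simp add: power2_eq_square field_simps)
  also have "\<dots> \<le> 1"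
  proof -
    have "real m * exp (1 / 2) \<le> (real m + 1) * (2 * ln (real b))"
      using exp_half_le2 lnb m by (intro mult_mono) auto
    with hb bpos show ?thesis
      by (simp add: field_simps)
  qed
  finally show ?thesis .
qed

lemma power_deficit_le:
  fixes m b :: nat and a x :: real
  assumes m: "m \<ge> 1" and b: "b \<ge> 3" and hb: "real b \<ge> 2 * (real m + 1) * ln (real b)"
    and a: "a \<ge> 0" and x: "x \<ge> 0" and bx: "real b * x \<le> a"
  shows "real b * real m * (real m * a - a + x) ^ b \<le> (real m * a) ^ b"
proof -
  define y where "y = (real b - 1) / (real b * real m)"
  have bpos: "real b > 0" using b by simp
  have "real b \<le> real b * real m"
    using m mult_left_mono[of 1 "real m" "real b"] by simp
  hence "real b - 1 \<le> real b * real m"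
    by linarith
  hence y: "0 \<le> y" "y \<le> 1"
    using b m unfolding y_def by (simp_all add: divide_le_eq)
  have "real m * a - a + x \<le> real m * a * (1 - y)"
    using bx bpos m unfolding y_def by (simp add: field_simps)
  moreover have "0 \<le> real m * a - a + x"
    using m a x mult_right_mono[OF _ a, of 1 "real m"] by simp
  ultimately have "(real m * a - a + x) ^ b \<le> (real m * a) ^ b * (1 - y) ^ b"
    by (metis power_mono power_mult_distrib)
  also have "(1 - y) ^ b \<le> exp (- y) ^ b"
    using y by (intro power_mono) (auto simp: exp_ge_add_one_self[of "-y", simplified])
  also have "exp (- y) ^ b = exp (- ((real b - 1) / real m))"
    using bpos by (simp add: y_def exp_of_nat_mult[symmetric])
  finally have "(real m * a - a + x) ^ b \<le> (real m * a) ^ b * exp (- ((real b - 1) / real m))"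
    using a by (simp add: mult_left_mono)
  hence "real b * real m * (real m * a - a + x) ^ b
      \<le> real b * real m * ((real m * a) ^ b * exp (- ((real b - 1) / real m)))"
    using m by (intro mult_left_mono) auto
  also have "\<dots> = (real m * a) ^ b * (real b * real m * exp (- ((real b - 1) / real m)))"
    by (simp only: ac_simps)
  also have "\<dots> \<le> (real m * a) ^ b"
    using exp_deficit_le[OF m b hb] a by (simp add: mult_left_le)
  finally show ?thesis .
qed

lemma power_deficit_le_nat:
  fixes b k x a :: nat
  assumes k: "k \<ge> 2" and b: "b \<ge> 3" and hb: "real b \<ge> 2 * real k * ln (real b)"
    and bx: "b * x \<le> a"
  shows "b * (k - 1) * (x + (k - 2) * a) ^ b \<le> ((k - 1) * a) ^ b"
proof -
  define m where "m = k - 1"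
  have m: "m \<ge> 1" "real k = real m + 1" "real (k - 2) = real m - 1"
    using k by (auto simp: m_def of_nat_diff)
  have eq: "real (x + (k - 2) * a) = real m * real a - real a + real x"
    unfolding of_nat_add of_nat_mult m(3) by (simp add: algebra_simps)
  have "real b * real x \<le> real a"
    using bx by (simp only: of_nat_mult[symmetric] of_nat_le_iff)
  then have "real b * real m * real (x + (k - 2) * a) ^ b \<le> (real m * real a) ^ b"
    unfolding eq using hb m(2) by (intro power_deficit_le[OF m(1) b]) simp_all
  then have "real (b * m * (x + (k - 2) * a) ^ b) \<le> real ((m * a) ^ b)"
    by simp
  then show ?thesis
    by (simp only: of_nat_le_iff m_def)
qed

lemma card_unfrozen_Cons_le:
  assumes c: "c < k" and j: "j < b" and v: "v \<in> tree_vertices b h"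
    and IH: "\<And>c'. c' < k \<Longrightarrow>
      b * card {\<sigma> \<in> colorings b h k. \<sigma> [] = c' \<and> \<not> frozen b h k \<sigma> v} \<le> rooted_count b k h"
  shows "b * card {\<sigma> \<in> colorings b (Suc h) k. \<sigma> [] = c \<and> \<not> frozen b (Suc h) k \<sigma> (j # v)}
    \<le> rooted_count b k (Suc h)"
proof -
  define R where "R i \<tau> \<longleftrightarrow> (i = j \<longrightarrow> \<not> frozen b h k \<tau> v)" for i \<tau>
  define X where "X = card {\<tau> \<in> colorings b h k. \<tau> [] \<noteq> c \<and> \<not> frozen b h k \<tau> v}"
  define Y where "Y = (k - 1) * rooted_count b k h"
  have "card {\<sigma> \<in> colorings b (Suc h) k. \<sigma> [] = c \<and> \<not> frozen b (Suc h) k \<sigma> (j # v)}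
      \<le> card {\<sigma> \<in> colorings b (Suc h) k. \<sigma> [] = c \<and> (\<forall>i<b. R i (child_coloring b h \<sigma> i))}"
    using frozen_Cons[OF j v] finite_colorings by (intro card_mono) (auto simp: R_def)
  also have "\<dots> = (\<Prod>i<b. card {\<tau> \<in> colorings b h k. \<tau> [] \<noteq> c \<and> R i \<tau>})"
    by (rule card_colorings_root_children[OF c])
  also have "\<dots> = X * (\<Prod>i\<in>{..<b} - {j}. card {\<tau> \<in> colorings b h k. \<tau> [] \<noteq> c \<and> R i \<tau>})"
    using j by (simp add: prod.remove R_def X_def)
  also have "\<dots> = X * Y ^ (b - 1)"
    using j card_colorings_root_neq_eq[OF c] by (simp add: R_def Y_def)
  finally have "b * card {\<sigma> \<in> colorings b (Suc h) k. \<sigma> [] = c \<and> \<not> frozen b (Suc h) k \<sigma> (j # v)}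
      \<le> (b * X) * Y ^ (b - 1)"
    by simp
  also have "b * X \<le> Y"
  proof -
    have "b * X = (\<Sum>c'\<in>{..<k} - {c}.
        b * card {\<tau> \<in> colorings b h k. \<tau> [] = c' \<and> \<not> frozen b h k \<tau> v})"
      by (simp add: X_def card_colorings_root_neq sum_distrib_left)
    also have "\<dots> \<le> (\<Sum>c'\<in>{..<k} - {c}. rooted_count b k h)"
      using IH by (intro sum_mono) auto
    finally show ?thesis
      using c by (simp add: Y_def)
  qed
  also have "Y * Y ^ (b - 1) = rooted_count b k (Suc h)"
    using j by (simp add: Y_def power_eq_if)
  finally show ?thesis
    by simp
qed

lemma card_unfrozen_root_le_sum:
  assumes "c < k"
  shows "card {\<sigma> \<in> colorings b (Suc h) k. \<sigma> [] = c \<and> \<not> frozen b (Suc h) k \<sigma> []}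
    \<le> (\<Sum>c'\<in>{..<k} - {c}.
          card {\<tau> \<in> colorings b h k. \<tau> [] \<noteq> c \<and> \<not> (frozen b h k \<tau> [] \<and> \<tau> [] = c')} ^ b)"
proof -
  define S where "S c' = {\<sigma> \<in> colorings b (Suc h) k. \<sigma> [] = c \<and>
    (\<forall>j<b. \<not> (frozen b h k (child_coloring b h \<sigma> j) [] \<and> child_coloring b h \<sigma> j [] = c'))}" for c'
  have "{\<sigma> \<in> colorings b (Suc h) k. \<sigma> [] = c \<and> \<not> frozen b (Suc h) k \<sigma> []}
      \<subseteq> (\<Union>c'\<in>{..<k} - {c}. S c')"
  proof
    fix \<sigma> assume \<sigma>: "\<sigma> \<in> {\<sigma> \<in> colorings b (Suc h) k. \<sigma> [] = c \<and> \<not> frozen b (Suc h) k \<sigma> []}"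
    then obtain c' where "c' < k" "c' \<noteq> c"
      "\<And>j. j < b \<Longrightarrow> \<not> (frozen b h k (child_coloring b h \<sigma> j) [] \<and> child_coloring b h \<sigma> j [] = c')"
      using unfrozen_root_free_color[of \<sigma> b h k] by blast
    with \<sigma> show "\<sigma> \<in> (\<Union>c'\<in>{..<k} - {c}. S c')"
      by (auto simp: S_def)
  qed
  then have "card {\<sigma> \<in> colorings b (Suc h) k. \<sigma> [] = c \<and> \<not> frozen b (Suc h) k \<sigma> []}
      \<le> card (\<Union>c'\<in>{..<k} - {c}. S c')"
    by (intro card_mono) (auto simp: S_def intro: finite_subset[OF _ finite_colorings])
  also have "\<dots> \<le> (\<Sum>c'\<in>{..<k} - {c}. card (S c'))"
    by (rule card_UN_le) simp
  also have "\<dots> = (\<Sum>c'\<in>{..<k} - {c}.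
      card {\<tau> \<in> colorings b h k. \<tau> [] \<noteq> c \<and> \<not> (frozen b h k \<tau> [] \<and> \<tau> [] = c')} ^ b)"
  proof (rule sum.cong)
    fix c'
    show "card (S c')
        = card {\<tau> \<in> colorings b h k. \<tau> [] \<noteq> c \<and> \<not> (frozen b h k \<tau> [] \<and> \<tau> [] = c')} ^ b"
      using card_colorings_root_children[OF assms, of b h "\<lambda>_ \<tau>. \<not> (frozen b h k \<tau> [] \<and> \<tau> [] = c')"]
      unfolding S_def by simp
  qed simp
  finally show ?thesis .
qed

lemma card_avoiding_frozen_color:
  assumes "c < k" "c' < k" "c' \<noteq> c"
  shows "card {\<tau> \<in> colorings b h k. \<tau> [] \<noteq> c \<and> \<not> (frozen b h k \<tau> [] \<and> \<tau> [] = c')}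
    = card {\<tau> \<in> colorings b h k. \<tau> [] = c' \<and> \<not> frozen b h k \<tau> []} + (k - 2) * rooted_count b k h"
proof -
  let ?P = "\<lambda>\<tau>. \<not> (frozen b h k \<tau> [] \<and> \<tau> [] = c')"
  have "card {\<tau> \<in> colorings b h k. \<tau> [] \<noteq> c \<and> ?P \<tau>}
      = (\<Sum>c''\<in>{..<k} - {c}. card {\<tau> \<in> colorings b h k. \<tau> [] = c'' \<and> ?P \<tau>})"
    by (rule card_colorings_root_neq)
  also have "\<dots> = card {\<tau> \<in> colorings b h k. \<tau> [] = c' \<and> ?P \<tau>}
      + (\<Sum>c''\<in>{..<k} - {c} - {c'}. card {\<tau> \<in> colorings b h k. \<tau> [] = c'' \<and> ?P \<tau>})"
    using assms by (intro sum.remove) auto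
  also have "{\<tau> \<in> colorings b h k. \<tau> [] = c' \<and> ?P \<tau>}
      = {\<tau> \<in> colorings b h k. \<tau> [] = c' \<and> \<not> frozen b h k \<tau> []}"
    by auto
  also have "(\<Sum>c''\<in>{..<k} - {c} - {c'}. card {\<tau> \<in> colorings b h k. \<tau> [] = c'' \<and> ?P \<tau>})
      = (\<Sum>c''\<in>{..<k} - {c} - {c'}. rooted_count b k h)"
    by (intro sum.cong) (auto simp: card_colorings_root_eq[symmetric] intro!: arg_cong[where f = card])
  also have "\<dots> = (k - 2) * rooted_count b k h"
    using assms by (simp add: card_Diff_subset numeral_2_eq_2)
  finally show ?thesis .
qed

lemma card_unfrozen_root_le:
  assumes b: "b \<ge> 3" and hb: "real b \<ge> 2 * real k * ln (real b)" and c: "c < k"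
    and IH: "\<And>c'. c' < k \<Longrightarrow>
      b * card {\<sigma> \<in> colorings b h k. \<sigma> [] = c' \<and> \<not> frozen b h k \<sigma> []} \<le> rooted_count b k h"
  shows "b * card {\<sigma> \<in> colorings b (Suc h) k. \<sigma> [] = c \<and> \<not> frozen b (Suc h) k \<sigma> []}
    \<le> rooted_count b k (Suc h)"
proof (cases "k \<ge> 2")
  case False
  with c have "{..<k} - {c} = {}"
    by auto
  with card_unfrozen_root_le_sum[OF c, of b h] show ?thesis
    by simp
next
  case True
  define a where "a = rooted_count b k h"
  define N where "N c' = card {\<tau> \<in> colorings b h k. \<tau> [] = c' \<and> \<not> frozen b h k \<tau> []}" for c'
  let ?U = "{\<sigma> \<in> colorings b (Suc h) k. \<sigma> [] = c \<and> \<not> frozen b (Suc h) k \<sigma> []}"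
  have "card ?U \<le> (\<Sum>c'\<in>{..<k} - {c}.
      card {\<tau> \<in> colorings b h k. \<tau> [] \<noteq> c \<and> \<not> (frozen b h k \<tau> [] \<and> \<tau> [] = c')} ^ b)"
    by (rule card_unfrozen_root_le_sum[OF c])
  also have "\<dots> = (\<Sum>c'\<in>{..<k} - {c}. (N c' + (k - 2) * a) ^ b)"
  proof (rule sum.cong)
    fix c' assume "c' \<in> {..<k} - {c}"
    then show "card {\<tau> \<in> colorings b h k. \<tau> [] \<noteq> c \<and> \<not> (frozen b h k \<tau> [] \<and> \<tau> [] = c')} ^ b
        = (N c' + (k - 2) * a) ^ b"
      unfolding N_def a_def by (subst card_avoiding_frozen_color[OF c]) auto
  qed simp
  finally have "(k - 1) * (b * card ?U) \<le> (k - 1) * (b * (\<Sum>c'\<in>{..<k} - {c}. (N c' + (k - 2) * a) ^ b))"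
    by simp
  also have "\<dots> = (\<Sum>c'\<in>{..<k} - {c}. b * (k - 1) * (N c' + (k - 2) * a) ^ b)"
    by (simp add: sum_distrib_left ac_simps)
  also have "\<dots> \<le> (\<Sum>c'\<in>{..<k} - {c}. ((k - 1) * a) ^ b)"
    using IH by (intro sum_mono power_deficit_le_nat[OF True b hb]) (auto simp: N_def a_def)
  also have "\<dots> = (k - 1) * rooted_count b k (Suc h)"
    using c by (simp add: a_def)
  finally show ?thesis
    using True by simp
qed

lemma card_unfrozen_with_root_le:
  assumes "b \<ge> 3" "real b \<ge> 2 * real k * ln (real b)"
  shows "v \<in> tree_vertices b h \<Longrightarrow> c < k \<Longrightarrow>
    b * card {\<sigma> \<in> colorings b h k. \<sigma> [] = c \<and> \<not> frozen b h k \<sigma> v} \<le> rooted_count b k h"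
proof (induction h arbitrary: v c)
  case 0
  then show ?case
    using frozen_leaf[of "[]" b 0 k] by (simp add: tree_vertices_0 tree_leaves_def)
next
  case (Suc h)
  show ?case
  proof (cases v)
    case Nil
    with Suc show ?thesis
      using card_unfrozen_root_le[OF assms] by simp
  next
    case (Cons j v')
    with Suc show ?thesis
      using card_unfrozen_Cons_le by simp
  qed
qed

lemma card_unfrozen_le:
  assumes "b \<ge> 3" "real b \<ge> 2 * real k * ln (real b)" "v \<in> tree_vertices b h"
  shows "b * card {\<sigma> \<in> colorings b h k. \<not> frozen b h k \<sigma> v} \<le> card (colorings b h k)"
proof -
  have "b * card {\<sigma> \<in> colorings b h k. \<not> frozen b h k \<sigma> v}
      = (\<Sum>c<k. b * card {\<sigma> \<in> colorings b h k. \<sigma> [] = c \<and> \<not> frozen b h k \<sigma> v})"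
    using card_colorings_sum_roots[of b h k "\<lambda>\<sigma>. \<not> frozen b h k \<sigma> v"]
    by (simp add: sum_distrib_left)
  also have "\<dots> \<le> (\<Sum>c<k. card {\<sigma> \<in> colorings b h k. \<sigma> [] = c})"
    using card_unfrozen_with_root_le[OF assms(1,2,3)]
    by (intro sum_mono) (simp add: card_colorings_root_eq)
  also have "\<dots> = card (colorings b h k)"
    using card_colorings_sum_roots[of b h k "\<lambda>_. True"] by simp
  finally show ?thesis .
qed

theorem lemma12:
  "\<exists>B::nat. \<forall>b k h :: nat. \<forall>v.
     b \<ge> B \<longrightarrow> real b / (real k * ln (real b)) \<ge> 2 \<longrightarrow> v \<in> tree_vertices b h \<longrightarrow>
     real (card {sigma \<in> colorings b h k. \<not> frozen b h k sigma v})
       / real (card (colorings b h k)) \<le> 1 / real b"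
proof (intro exI[of _ 3] allI impI)
  fix b k h :: nat and v
  assume b: "3 \<le> b" and ratio: "2 \<le> real b / (real k * ln (real b))" and v: "v \<in> tree_vertices b h"
  have "real k * ln (real b) > 0"
    using ratio b by (cases "k = 0") auto
  with ratio have "real b \<ge> 2 * real k * ln (real b)"
    by (simp add: le_divide_eq)
  from card_unfrozen_le[OF b this v]
  have "real b * real (card {sigma \<in> colorings b h k. \<not> frozen b h k sigma v})
      \<le> real (card (colorings b h k))"
    by (metis of_nat_le_iff of_nat_mult)
  with b show "real (card {sigma \<in> colorings b h k. \<not> frozen b h k sigma v})
      / real (card (colorings b h k)) \<le> 1 / real b"
    by (cases "card (colorings b h k) = 0") (simp_all add: field_simps)
qed

end
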